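(* For every value profile $(v_1,v_2)\in\mathbb R^2_{\ge0}$, the allocation $x=x(v_1,v_2)$ of the two-bidder auction defined below satisfies $\bar W(x)\ge\frac34\bar W^*$.
   Context: One divisible good, two bidders with values per unit $v_1,v_2\ge0$ and known budgets $B_1=B_2=1$. The allocation $x(v_1,v_2)=(x_1,x_2)$ is symmetric ($x(v_1,v_2)$ is obtained from $x(v_2,v_1)$ by swapping coordinates) and for $v_1\ge v_2$ is given by the first applicable rule: if $v_1=v_2$, $x=(\frac12,\frac12)$; else if $v_2\le\frac13$, $x=(1,0)$; else if $\frac13\le v_2\le1$, $x=(\frac14+\frac1{4v_2},\frac34-\frac1{4v_2})$; else ($v_2\ge1$) $x=(\frac12,\frac12)$. Liquid welfare: $\bar W(x)=\sum_i\min\{v_ix_i,B_i\}$; $\bar W^*=\max\{\bar W(x):x\ge0,x_1+x_2=1\}$. *)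

theory Defs
  imports Complex_Main
begin

definition budget :: real where "budget = 1"

definition alloc_ord :: "real \<Rightarrow> real \<Rightarrow> real \<times> real" where
  "alloc_ord v1 v2 =
     (if v1 = v2 then (1/2, 1/2)
      else if v2 \<le> 1/3 then (1, 0)
      else if v2 \<le> 1 then (1/4 + 1/(4*v2), 3/4 - 1/(4*v2))
      else (1/2, 1/2))"

definition alloc :: "real \<Rightarrow> real \<Rightarrow> real \<times> real" where
  "alloc v1 v2 = (if v1 \<ge> v2 then alloc_ord v1 v2
                  else (case alloc_ord v2 v1 of (a, b) \<Rightarrow> (b, a)))"

definition liquid_welfare :: "real \<Rightarrow> real \<Rightarrow> real \<times> real \<Rightarrow> real" where
  "liquid_welfare v1 v2 x = min (v1 * fst x) budget + min (v2 * snd x) budget"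

text \<open>Optimal liquid welfare: supremum (attained, hence the maximum) over feasible allocations x >= 0, x1 + x2 = 1.\<close>
definition opt_liquid_welfare :: "real \<Rightarrow> real \<Rightarrow> real" where
  "opt_liquid_welfare v1 v2 =
     Sup (liquid_welfare v1 v2 ` {x. fst x \<ge> 0 \<and> snd x \<ge> 0 \<and> fst x + snd x = 1})"

end

theory Submission imports Defs begin

text \<open>For \<open>v\<^sub>1 \<ge> v\<^sub>2\<close> every feasible allocation has welfare at most \<open>v\<^sub>1\<close>, at most \<open>2\<close>, and at
  most \<open>1 + v\<^sub>2 - v\<^sub>2/v\<^sub>1\<close>: capping bidder 1 at his budget, the best one can do is give him
  exactly the share \<open>1/v\<^sub>1\<close> and the rest to bidder 2. The allocation rule is tuned so that
  \<open>3/4\<close> of these bounds is always reached; in the middle regime \<open>1/3 < v\<^sub>2 \<le> 1\<close> this reduces to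
  \<open>4 v\<^sub>1 v\<^sub>2 \<le> v\<^sub>1\<^sup>2 (1 + v\<^sub>2) + 3 v\<^sub>2\<^sup>2\<close>, i.e. \<open>(2 v\<^sub>1 - 3 v\<^sub>2)\<^sup>2 \<ge> 0\<close> together with \<open>v\<^sub>2 \<ge> 1/3\<close>.\<close>

lemma liquid_welfare_swap:
  "liquid_welfare v1 v2 (a, b) = liquid_welfare v2 v1 (b, a)"
  by (simp add: liquid_welfare_def)

lemma opt_liquid_welfare_le:
  assumes "\<And>y. fst y \<ge> 0 \<Longrightarrow> snd y \<ge> 0 \<Longrightarrow> fst y + snd y = 1 \<Longrightarrow> liquid_welfare v1 v2 y \<le> c"
  shows "opt_liquid_welfare v1 v2 \<le> c"
  unfolding opt_liquid_welfare_def
proof (rule cSup_least)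
  have "(1, 0) \<in> {x :: real \<times> real. fst x \<ge> 0 \<and> snd x \<ge> 0 \<and> fst x + snd x = 1}"
    by simp
  then show "liquid_welfare v1 v2 ` {x. fst x \<ge> 0 \<and> snd x \<ge> 0 \<and> fst x + snd x = 1} \<noteq> {}"
    by blast
qed (use assms in auto)

context
  fixes v1 v2 :: real and y :: "real \<times> real"
  assumes y_nonneg: "fst y \<ge> 0" "snd y \<ge> 0" and y_sum: "fst y + snd y = 1"
begin

lemma liquid_welfare_le_max_value:
  assumes "v1 \<ge> 0" "v2 \<ge> 0"
  shows "liquid_welfare v1 v2 y \<le> max v1 v2"
proof -
  have "v1 * fst y + v2 * snd y \<le> max v1 v2 * fst y + max v1 v2 * snd y"
    using assms y_nonneg by (intro add_mono mult_right_mono) auto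
  also have "\<dots> = max v1 v2"
    using y_sum by (simp flip: distrib_left)
  finally show ?thesis
    unfolding liquid_welfare_def by linarith
qed

lemma liquid_welfare_le_capped:
  assumes "0 \<le> v2" "v2 \<le> v1" "0 < v1"
  shows "liquid_welfare v1 v2 y \<le> 1 + v2 - v2 / v1"
proof -
  have "snd y = 1 - fst y"
    using y_sum by simp
  then have "liquid_welfare v1 v2 y \<le> min (v1 * fst y) 1 + v2 * (1 - fst y)"
    unfolding liquid_welfare_def budget_def by simp
  also have "\<dots> \<le> 1 + v2 - v2 / v1"
  proof (cases "v1 * fst y \<le> 1")
    case True
    then have "fst y * (v1 - v2) \<le> (1 / v1) * (v1 - v2)"
      using assms by (intro mult_right_mono) (auto simp: field_simps)
    with True assms show ?thesis
      by (simp add: field_simps)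
  next
    case False
    then have "v2 * 1 \<le> v2 * (v1 * fst y)"
      using assms by (intro mult_left_mono) auto
    then have "v2 / v1 \<le> v2 * fst y"
      using assms by (simp add: field_simps)
    with False show ?thesis
      by (simp add: algebra_simps)
  qed
  finally show ?thesis .
qed

lemma alloc_ord_approx:
  assumes "0 \<le> v2" "v2 \<le> v1"
  shows "3/4 * liquid_welfare v1 v2 y \<le> liquid_welfare v1 v2 (alloc_ord v1 v2)"
proof -
  have le_v1: "liquid_welfare v1 v2 y \<le> v1"
    using liquid_welfare_le_max_value assms by (simp add: max_def)
  have le_two: "liquid_welfare v1 v2 y \<le> 2"
    by (simp add: liquid_welfare_def budget_def)
  consider "v1 = v2" | "v1 \<noteq> v2" "v2 \<le> 1/3" | "v1 \<noteq> v2" "1/3 < v2" "v2 \<le> 1" | "1 < v2"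
    by linarith
  then show ?thesis
  proof cases
    case 1
    then have "liquid_welfare v1 v2 (alloc_ord v1 v2) = min v1 2"
      by (simp add: alloc_ord_def liquid_welfare_def budget_def min_def)
    with le_v1 le_two assms show ?thesis
      by linarith
  next
    case 2
    have "liquid_welfare v1 v2 y \<le> 1 + v2"
      using y_nonneg y_sum assms mult_left_le[of "snd y" v2]
      by (simp add: liquid_welfare_def budget_def)
    moreover have "liquid_welfare v1 v2 (alloc_ord v1 v2) = min v1 1"
      using 2 by (simp add: alloc_ord_def liquid_welfare_def budget_def)
    ultimately show ?thesis
      using le_v1 2 assms by (simp add: min_def)
  next
    case 3
    define a where "a = v1 / 4 + v1 / (4 * v2)"
    have "v2 < v1" "0 < v2"
      using 3 assms by auto
    have alloc: "liquid_welfare v1 v2 (alloc_ord v1 v2) = min a 1 + (3 * v2 - 1) / 4"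
      using 3 unfolding alloc_ord_def liquid_welfare_def budget_def a_def
      by (simp add: field_simps)
    have capped: "liquid_welfare v1 v2 y \<le> 1 + v2 - v2 / v1"
      using liquid_welfare_le_capped assms \<open>0 < v2\<close> by simp
    show ?thesis
    proof (cases "1 \<le> a")
      case True
      have "v2 / v1 \<ge> 0"
        using assms by simp
      with capped alloc True show ?thesis
        by (simp add: min_absorb2 field_simps)
    next
      case False
      have "4 * v1 * v2 \<le> v1\<^sup>2 * (1 + v2) + 3 * v2\<^sup>2"
      proof -
        have "v1\<^sup>2 * (4/3) \<le> v1\<^sup>2 * (1 + v2)"
          using 3 by (intro mult_left_mono) auto
        moreover have "0 \<le> (2 * v1 - 3 * v2)\<^sup>2"
          by simp
        ultimately show ?thesis
          by (simp add: power2_eq_square algebra_simps)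
      qed
      then have "3 * (1 + v2 - v2 / v1) \<le> 4 * (a + (3 * v2 - 1) / 4)"
        using \<open>v2 < v1\<close> \<open>0 < v2\<close> unfolding a_def
        by (simp add: field_simps power2_eq_square)
      with capped alloc False show ?thesis
        by simp
    qed
  next
    case 4
    then have "liquid_welfare v1 v2 (alloc_ord v1 v2) = min (v1 / 2) 1 + min (v2 / 2) 1"
      by (simp add: alloc_ord_def liquid_welfare_def budget_def)
    with le_v1 le_two 4 assms show ?thesis
      by (simp add: min_def)
  qed
qed

end

theorem mainTheorem12:
  fixes v1 v2 :: real
  assumes "v1 \<ge> 0" and "v2 \<ge> 0"
  shows "liquid_welfare v1 v2 (alloc v1 v2) \<ge> 3/4 * opt_liquid_welfare v1 v2"
proof -
  have approx: "3/4 * liquid_welfare v1 v2 y \<le> liquid_welfare v1 v2 (alloc v1 v2)"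
    if "fst y \<ge> 0" "snd y \<ge> 0" "fst y + snd y = 1" for y
  proof (cases "v2 \<le> v1")
    case True
    then show ?thesis
      using alloc_ord_approx[OF that] assms by (simp add: alloc_def)
  next
    case False
    obtain a b where ab: "alloc_ord v2 v1 = (a, b)"
      by fastforce
    have "3/4 * liquid_welfare v2 v1 (snd y, fst y) \<le> liquid_welfare v2 v1 (a, b)"
      using alloc_ord_approx[of "(snd y, fst y)" v1 v2] that assms False ab by simp
    moreover have "liquid_welfare v1 v2 y = liquid_welfare v2 v1 (snd y, fst y)"
      by (simp add: liquid_welfare_def)
    ultimately show ?thesis
      using False ab by (simp add: alloc_def liquid_welfare_swap[of v1 v2 b a])
  qed
  have "opt_liquid_welfare v1 v2 \<le> 4/3 * liquid_welfare v1 v2 (alloc v1 v2)"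
  proof (rule opt_liquid_welfare_le)
    fix y :: "real \<times> real"
    assume "fst y \<ge> 0" "snd y \<ge> 0" "fst y + snd y = 1"
    from approx[OF this] show "liquid_welfare v1 v2 y \<le> 4/3 * liquid_welfare v1 v2 (alloc v1 v2)"
      by simp
  qed
  then show ?thesis
    by simp
qed

end
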